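(* Let $\{\rho_\theta\}$ be a model as in the context and suppose $\theta\mapsto\rho_\theta$ is differentiable from the right at $\theta$, with right derivative $\rho'_\theta$. Take $c_n=\sqrt n$. Then $J^{R,1}_\theta=J^R_\theta$, where $J^R_\theta=\mathrm{Tr}(\rho_\theta L^R_\theta(L^R_\theta)^\dagger)$ and $L^R_\theta=\rho_\theta^{-1}\rho'_\theta$.
   Context: $\mathcal H$ finite-dimensional, $\rho_\theta>0$. $\Delta^1_\delta f(\theta)=(f(\theta+\delta)-f(\theta))/\delta$; $L^{R,n,1}_{\theta,\delta}$ solves $\Delta^1_\delta\rho_\theta^{\otimes n}=\rho_\theta^{\otimes n}L^{R,n,1}_{\theta,\delta}$; $J^{R,1}_\theta=\limsup_{h\to0+}\limsup_{n\to\infty}c_n^{-2}\mathrm{Tr}\big(\rho_\theta^{\otimes n}L^{R,n,1}_{\theta,h/c_n}(L^{R,n,1}_{\theta,h/c_n})^\dagger\big)$. *)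

theory Defs
  imports "HOL-Analysis.Analysis" "Jordan_Normal_Form.Schur_Decomposition"
begin

definition mtrace :: "complex mat \<Rightarrow> complex" where
  "mtrace A = (\<Sum>i<dim_row A. A $$ (i, i))"

definition kron :: "complex mat \<Rightarrow> complex mat \<Rightarrow> complex mat" where
  "kron A B = mat (dim_row A * dim_row B) (dim_col A * dim_col B)
     (\<lambda>(i, j). A $$ (i div dim_row B, j div dim_col B) * B $$ (i mod dim_row B, j mod dim_col B))"

fun tpow :: "complex mat \<Rightarrow> nat \<Rightarrow> complex mat" where
  "tpow A 0 = 1\<^sub>m 1"
| "tpow A (Suc n) = kron A (tpow A n)"

definition minv :: "complex mat \<Rightarrow> complex mat" where
  "minv A = (THE B. B \<in> carrier_mat (dim_row A) (dim_row A) \<and>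
                    A * B = 1\<^sub>m (dim_row A) \<and> B * A = 1\<^sub>m (dim_row A))"

definition pos_def :: "nat \<Rightarrow> complex mat \<Rightarrow> bool" where
  "pos_def d A \<longleftrightarrow> A \<in> carrier_mat d d \<and> mat_adjoint A = A \<and>
     (\<forall>v \<in> carrier_vec d. v \<noteq> 0\<^sub>v d \<longrightarrow>
        Im (conjugate v \<bullet> (A *\<^sub>v v)) = 0 \<and> Re (conjugate v \<bullet> (A *\<^sub>v v)) > 0)"

definition faithful_state :: "nat \<Rightarrow> complex mat \<Rightarrow> bool" where
  "faithful_state d A \<longleftrightarrow> pos_def d A \<and> mtrace A = 1"

definition Delta1 :: "(real \<Rightarrow> complex mat) \<Rightarrow> nat \<Rightarrow> real \<Rightarrow> real \<Rightarrow> complex mat" where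
  "Delta1 \<rho> n \<theta> \<delta> = of_real (1 / \<delta>) \<cdot>\<^sub>m (tpow (\<rho> (\<theta> + \<delta>)) n - tpow (\<rho> \<theta>) n)"

definition LRn1 :: "(real \<Rightarrow> complex mat) \<Rightarrow> nat \<Rightarrow> real \<Rightarrow> real \<Rightarrow> complex mat" where
  "LRn1 \<rho> n \<theta> \<delta> = (THE L. L \<in> carrier_mat (dim_row (tpow (\<rho> \<theta>) n)) (dim_row (tpow (\<rho> \<theta>) n))
        \<and> Delta1 \<rho> n \<theta> \<delta> = tpow (\<rho> \<theta>) n * L)"

definition JR1 :: "(real \<Rightarrow> complex mat) \<Rightarrow> real \<Rightarrow> (nat \<Rightarrow> real) \<Rightarrow> ereal" where
  "JR1 \<rho> \<theta> c = Limsup (at_right 0) (\<lambda>h. Limsup sequentially (\<lambda>n.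
      ereal (Re (mtrace (tpow (\<rho> \<theta>) n * LRn1 \<rho> n \<theta> (h / c n)
                         * mat_adjoint (LRn1 \<rho> n \<theta> (h / c n)))) / (c n)\<^sup>2)))"

definition has_right_deriv_mat :: "nat \<Rightarrow> (real \<Rightarrow> complex mat) \<Rightarrow> complex mat \<Rightarrow> real \<Rightarrow> bool" where
  "has_right_deriv_mat d \<rho> D \<theta> \<longleftrightarrow> D \<in> carrier_mat d d \<and>
     (\<forall>i<d. \<forall>j<d. ((\<lambda>t. \<rho> t $$ (i, j)) has_vector_derivative D $$ (i, j)) (at \<theta> within {\<theta>..}))"

end

theory Submission
  imports Defs
begin

(* Write \<rho> = \<rho> \<theta>, \<sigma> = \<rho> (\<theta> + \<delta>) and R = \<rho>\<^sup>-\<^sup>1.  The defining equation forces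
  L = R\<^sup>\<otimes>\<^sup>n \<Delta>, so Tr(\<rho>\<^sup>\<otimes>\<^sup>n L L\<^sup>\<dagger>) = Tr(\<Delta> \<Delta>\<^sup>\<dagger> R\<^sup>\<otimes>\<^sup>n).  Expanding the square of
  \<Delta> = (\<sigma>\<^sup>\<otimes>\<^sup>n - \<rho>\<^sup>\<otimes>\<^sup>n) / \<delta> and using that the trace is multiplicative on tensor products
  gives the closed form ((Tr \<sigma>\<sigma>R)\<^sup>n - 1) / \<delta>\<^sup>2, and Tr \<sigma>\<sigma>R = 1 + \<delta>\<^sup>2 g(\<delta>) with
  g(\<delta>) = Tr(D D\<^sup>\<dagger> R), D = (\<sigma> - \<rho>) / \<delta>, where g(\<delta>) tends to J\<^sup>R as \<delta> \<rightarrow> 0+.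
  For \<delta> = h / sqrt n the normalised quantity is ((1 + h\<^sup>2 g(\<delta>) / n)\<^sup>n - 1) / h\<^sup>2, which
  tends to (exp (h\<^sup>2 J\<^sup>R) - 1) / h\<^sup>2 as n \<rightarrow> \<infinity>, and this tends to J\<^sup>R as h \<rightarrow> 0+. *)

lemma sum_lessThan_mult_div_mod:
  assumes q: "(q::nat) > 0"
  shows "(\<Sum>k<b*q. f (k div q) (k mod q)) = (\<Sum>i<b. \<Sum>j<q. f i j)"
proof -
  have "(\<Sum>i<b. \<Sum>j<q. f i j) = (\<Sum>p\<in>{..<b}\<times>{..<q}. f (fst p) (snd p))"
    by (simp add: sum.cartesian_product split_beta)
  also have "\<dots> = (\<Sum>k<b*q. f (k div q) (k mod q))"
  proof (rule sum.reindex_bij_witness[where i="\<lambda>k. (k div q, k mod q)" and j="\<lambda>p. fst p * q + snd p"])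
    fix p assume "p \<in> {..<b}\<times>{..<q}"
    then obtain i j where ij: "p = (i, j)" "i < b" "j < q" by auto
    have "i * q + j < (i + 1) * q" using ij by simp
    also have "\<dots> \<le> b * q" using ij by (intro mult_right_mono) auto
    finally show "fst p * q + snd p \<in> {..<b*q}" using ij by simp
  next
    fix k assume "k \<in> {..<b*q}"
    then show "(k div q, k mod q) \<in> {..<b}\<times>{..<q}"
      using q by (auto simp: less_mult_imp_div_less)
  qed (use q in \<open>auto simp: prod_eq_iff\<close>)
  finally show ?thesis by simp
qed

lemma less_mult_div_mod:
  assumes "(i::nat) < a * p"
  shows "i div p < a" "i mod p < p"
proof -
  have "p > 0" using assms by (cases p) auto
  then show "i mod p < p" by simp
  show "i div p < a" using assms by (simp add: less_mult_imp_div_less)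
qed

lemma index_mult_mat_sum:
  assumes "A \<in> carrier_mat m k" "B \<in> carrier_mat k n" "i < m" "j < n"
  shows "(A * B) $$ (i, j) = (\<Sum>l<k. A $$ (i, l) * B $$ (l, j))"
  using assms by (auto simp: scalar_prod_def lessThan_atLeast0 intro!: sum.cong)

subsection \<open>Kronecker products\<close>

lemma dim_kron [simp]:
  "dim_row (kron A B) = dim_row A * dim_row B" "dim_col (kron A B) = dim_col A * dim_col B"
  by (auto simp: kron_def)

lemma kron_carrier_mat:
  "A \<in> carrier_mat a b \<Longrightarrow> B \<in> carrier_mat c e \<Longrightarrow> kron A B \<in> carrier_mat (a * c) (b * e)"
  by auto

lemma index_kron:
  "i < dim_row A * dim_row B \<Longrightarrow> j < dim_col A * dim_col B \<Longrightarrow>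
   kron A B $$ (i, j) = A $$ (i div dim_row B, j div dim_col B) * B $$ (i mod dim_row B, j mod dim_col B)"
  by (auto simp: kron_def)

lemma kron_mult:
  assumes A: "A \<in> carrier_mat a b" and B: "B \<in> carrier_mat b c"
    and C: "C \<in> carrier_mat p q" and D: "D \<in> carrier_mat q r" and q: "q > 0"
  shows "kron A C * kron B D = kron (A * B) (C * D)"
proof (rule eq_matI)
  fix i j assume "i < dim_row (kron (A * B) (C * D))" "j < dim_col (kron (A * B) (C * D))"
  then have i: "i < a * p" and j: "j < c * r" using assms by auto
  note bounds = less_mult_div_mod[OF i] less_mult_div_mod[OF j]
  have "(kron A C * kron B D) $$ (i, j) = (\<Sum>k<b*q. kron A C $$ (i, k) * kron B D $$ (k, j))"
    by (rule index_mult_mat_sum[OF kron_carrier_mat[OF A C] kron_carrier_mat[OF B D] i j])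
  also have "\<dots> = (\<Sum>k<b*q. (A $$ (i div p, k div q) * B $$ (k div q, j div r)) *
       (C $$ (i mod p, k mod q) * D $$ (k mod q, j mod r)))"
    using assms i j by (intro sum.cong refl) (auto simp: index_kron algebra_simps)
  also have "\<dots> = (\<Sum>k1<b. \<Sum>k2<q. (A $$ (i div p, k1) * B $$ (k1, j div r)) *
       (C $$ (i mod p, k2) * D $$ (k2, j mod r)))"
    by (rule sum_lessThan_mult_div_mod[OF q])
  also have "\<dots> = (A * B) $$ (i div p, j div r) * (C * D) $$ (i mod p, j mod r)"
    using bounds by (simp add: sum_product index_mult_mat_sum[OF A B] index_mult_mat_sum[OF C D])
  also have "\<dots> = kron (A * B) (C * D) $$ (i, j)"
    using assms i j by (simp add: index_kron)
  finally show "(kron A C * kron B D) $$ (i, j) = kron (A * B) (C * D) $$ (i, j)" .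
qed (use assms in auto)

lemma kron_one: "kron (1\<^sub>m a) (1\<^sub>m b) = 1\<^sub>m (a * b)"
proof (rule eq_matI)
  fix i j assume "i < dim_row (1\<^sub>m (a * b))" "j < dim_col (1\<^sub>m (a * b))"
  then have i: "i < a * b" and j: "j < a * b" by auto
  have "(i div b = j div b \<and> i mod b = j mod b) = (i = j)"
    by (metis div_mult_mod_eq)
  then show "kron (1\<^sub>m a) (1\<^sub>m b) $$ (i, j) = 1\<^sub>m (a * b) $$ (i, j)"
    using i j less_mult_div_mod[OF i] less_mult_div_mod[OF j] by (auto simp: index_kron)
qed auto

lemma mtrace_kron:
  assumes A: "A \<in> carrier_mat a a" and B: "B \<in> carrier_mat b b" and b: "b > 0"
  shows "mtrace (kron A B) = mtrace A * mtrace B"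
proof -
  have "mtrace (kron A B) = (\<Sum>k<a*b. A $$ (k div b, k div b) * B $$ (k mod b, k mod b))"
    unfolding mtrace_def using assms by (auto intro!: sum.cong simp: index_kron)
  also have "\<dots> = (\<Sum>i<a. \<Sum>j<b. A $$ (i, i) * B $$ (j, j))"
    by (rule sum_lessThan_mult_div_mod[OF b])
  also have "\<dots> = mtrace A * mtrace B"
    unfolding mtrace_def using assms by (simp add: sum_product)
  finally show ?thesis .
qed

subsection \<open>Adjoints and traces\<close>

lemma dim_mat_adjoint [simp]:
  "dim_row (mat_adjoint A) = dim_col A" "dim_col (mat_adjoint A) = dim_row A"
  by (auto simp: mat_adjoint_def)

lemma index_mat_adjoint [simp]:
  "i < dim_col A \<Longrightarrow> j < dim_row A \<Longrightarrow> mat_adjoint A $$ (i, j) = cnj (A $$ (j, i))"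
  by (auto simp: mat_adjoint_def mat_of_rows_def)

lemma mat_adjoint_carrier_mat: "A \<in> carrier_mat m n \<Longrightarrow> mat_adjoint A \<in> carrier_mat n m"
  by auto

lemma mat_adjoint_adjoint [simp]: "mat_adjoint (mat_adjoint (A :: complex mat)) = A"
  by (rule eq_matI) auto

lemma mat_adjoint_one [simp]: "mat_adjoint (1\<^sub>m n) = (1\<^sub>m n :: complex mat)"
  by (rule eq_matI) auto

lemma mat_adjoint_minus:
  "A \<in> carrier_mat m n \<Longrightarrow> B \<in> carrier_mat m n \<Longrightarrow>
   mat_adjoint (A - B) = mat_adjoint A - mat_adjoint (B :: complex mat)"
  by (rule eq_matI) auto

lemma mat_adjoint_smult: "mat_adjoint (c \<cdot>\<^sub>m A) = cnj c \<cdot>\<^sub>m mat_adjoint A"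
  by (rule eq_matI) auto

lemma mat_adjoint_mult:
  fixes A B :: "complex mat"
  assumes A: "A \<in> carrier_mat m k" and B: "B \<in> carrier_mat k n"
  shows "mat_adjoint (A * B) = mat_adjoint B * mat_adjoint A"
proof (rule eq_matI)
  fix i j assume "i < dim_row (mat_adjoint B * mat_adjoint A)" "j < dim_col (mat_adjoint B * mat_adjoint A)"
  then have i: "i < n" and j: "j < m" using assms by auto
  have "mat_adjoint (A * B) $$ (i, j) = (\<Sum>l<k. cnj (A $$ (j, l)) * cnj (B $$ (l, i)))"
    using assms i j by (simp add: index_mult_mat_sum[OF A B j i])
  also have "\<dots> = (mat_adjoint B * mat_adjoint A) $$ (i, j)"
    using assms i j
    by (simp add: index_mult_mat_sum[OF mat_adjoint_carrier_mat[OF B] mat_adjoint_carrier_mat[OF A] i j]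
        mult.commute)
  finally show "mat_adjoint (A * B) $$ (i, j) = (mat_adjoint B * mat_adjoint A) $$ (i, j)" .
qed (use assms in auto)

lemma mat_adjoint_kron: "mat_adjoint (kron A B) = kron (mat_adjoint A) (mat_adjoint B)"
proof (rule eq_matI)
  fix i j assume "i < dim_row (kron (mat_adjoint A) (mat_adjoint B))"
    "j < dim_col (kron (mat_adjoint A) (mat_adjoint B))"
  then have i: "i < dim_col A * dim_col B" and j: "j < dim_row A * dim_row B" by auto
  then show "mat_adjoint (kron A B) $$ (i, j) = kron (mat_adjoint A) (mat_adjoint B) $$ (i, j)"
    using less_mult_div_mod[OF i] less_mult_div_mod[OF j] by (simp add: index_kron)
qed auto

lemma mtrace_minus:
  "A \<in> carrier_mat m m \<Longrightarrow> B \<in> carrier_mat m m \<Longrightarrow> mtrace (A - B) = mtrace A - mtrace B"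
  unfolding mtrace_def by (auto simp: sum_subtractf)

lemma mtrace_smult: "A \<in> carrier_mat m m \<Longrightarrow> mtrace (c \<cdot>\<^sub>m A) = c * mtrace A"
  unfolding mtrace_def by (auto simp: sum_distrib_left)

lemma mtrace_adjoint: "A \<in> carrier_mat m m \<Longrightarrow> mtrace (mat_adjoint A) = cnj (mtrace A)"
  unfolding mtrace_def by auto

lemma mtrace_mult_comm:
  assumes A: "A \<in> carrier_mat m k" and B: "B \<in> carrier_mat k m"
  shows "mtrace (A * B) = mtrace (B * A)"
proof -
  have "mtrace (A * B) = (\<Sum>i<m. \<Sum>l<k. A $$ (i, l) * B $$ (l, i))"
    unfolding mtrace_def using assms by (auto simp: scalar_prod_def lessThan_atLeast0)
  also have "\<dots> = (\<Sum>l<k. \<Sum>i<m. B $$ (l, i) * A $$ (i, l))"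
    by (subst sum.swap) (simp add: mult.commute)
  also have "\<dots> = mtrace (B * A)"
    unfolding mtrace_def using assms by (auto simp: scalar_prod_def lessThan_atLeast0)
  finally show ?thesis .
qed

lemma mtrace_hermitian_mult_real:
  assumes A: "A \<in> carrier_mat m m" and B: "B \<in> carrier_mat m m"
    and hA: "mat_adjoint A = A" and hB: "mat_adjoint B = B"
  shows "Im (mtrace (A * B)) = 0"
proof -
  have "cnj (mtrace (A * B)) = mtrace (mat_adjoint (A * B))"
    using mtrace_adjoint[of "A * B" m] A B by simp
  also have "\<dots> = mtrace (B * A)"
    using hA hB by (simp add: mat_adjoint_mult[OF A B])
  also have "\<dots> = mtrace (A * B)"
    by (rule mtrace_mult_comm[OF B A])
  finally show ?thesis by (simp add: complex_eq_iff)
qed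

lemma mtrace_mult_adjoint_mult_eq_sum:
  assumes X: "X \<in> carrier_mat d d" and R: "R \<in> carrier_mat d d"
  shows "mtrace (X * mat_adjoint X * R) =
    (\<Sum>i<d. \<Sum>l<d. (\<Sum>k<d. X $$ (i, k) * cnj (X $$ (l, k))) * R $$ (l, i))"
  using assms
  by (auto simp: mtrace_def scalar_prod_def lessThan_atLeast0 sum_distrib_right intro!: sum.cong)

lemma mtrace_smult_mult_adjoint:
  assumes A: "A \<in> carrier_mat m n" and R: "R \<in> carrier_mat m m"
  shows "mtrace ((of_real c \<cdot>\<^sub>m A) * mat_adjoint (of_real c \<cdot>\<^sub>m A) * R)
    = of_real (c\<^sup>2) * mtrace (A * mat_adjoint A * R)"
proof -
  have A': "mat_adjoint A \<in> carrier_mat n m" using A by auto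
  have AA': "A * mat_adjoint A \<in> carrier_mat m m" using A A' by simp
  have "(of_real c \<cdot>\<^sub>m A) * mat_adjoint (of_real c \<cdot>\<^sub>m A) = of_real c \<cdot>\<^sub>m (of_real c \<cdot>\<^sub>m (A * mat_adjoint A))"
    using mult_smult_assoc_mat[OF A smult_carrier_mat[OF A']] mult_smult_distrib[OF A A']
    by (simp add: mat_adjoint_smult)
  also have "\<dots> * R = of_real c \<cdot>\<^sub>m (of_real c \<cdot>\<^sub>m (A * mat_adjoint A * R))"
    using mult_smult_assoc_mat[OF smult_carrier_mat[OF AA'] R] mult_smult_assoc_mat[OF AA' R] by simp
  moreover have M: "A * mat_adjoint A * R \<in> carrier_mat m m" using AA' R by simp
  ultimately show ?thesis
    by (simp add: mtrace_smult[OF smult_carrier_mat[OF M]] mtrace_smult[OF M] power2_eq_square)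
qed

subsection \<open>Tensor powers\<close>

lemma tpow_carrier_mat: "A \<in> carrier_mat d d \<Longrightarrow> tpow A n \<in> carrier_mat (d ^ n) (d ^ n)"
  by (induction n) (auto intro!: kron_carrier_mat)

lemma tpow_mult:
  assumes A: "A \<in> carrier_mat d d" and B: "B \<in> carrier_mat d d" and d: "d > 0"
  shows "tpow A n * tpow B n = tpow (A * B) n"
  by (induction n) (use kron_mult[OF A B tpow_carrier_mat[OF A] tpow_carrier_mat[OF B]] d in auto)

lemma tpow_one: "tpow (1\<^sub>m d) n = 1\<^sub>m (d ^ n)"
  by (induction n) (auto simp: kron_one)

lemma mat_adjoint_tpow: "mat_adjoint (tpow A n) = tpow (mat_adjoint A) n"
  by (induction n) (auto simp: mat_adjoint_kron)

lemma mtrace_tpow: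
  assumes A: "A \<in> carrier_mat d d" and d: "d > 0"
  shows "mtrace (tpow A n) = mtrace A ^ n"
  by (induction n) (use mtrace_kron[OF A tpow_carrier_mat[OF A]] d in \<open>auto simp: mtrace_def\<close>)

subsection \<open>Inverses of faithful states\<close>

lemma pos_def_invertible:
  assumes "pos_def d A"
  shows "\<exists>B. B \<in> carrier_mat d d \<and> A * B = 1\<^sub>m d \<and> B * A = 1\<^sub>m d"
proof -
  have A: "A \<in> carrier_mat d d" using assms by (simp add: pos_def_def)
  have "det A \<noteq> 0"
  proof
    assume "det A = 0"
    then obtain v where v: "v \<in> carrier_vec d" "v \<noteq> 0\<^sub>v d" "A *\<^sub>v v = 0\<^sub>v d"
      using det_0_iff_vec_prod_zero[OF A] by blast
    then have "Re (conjugate v \<bullet> (A *\<^sub>v v)) = 0" by simp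
    moreover have "Re (conjugate v \<bullet> (A *\<^sub>v v)) > 0" using assms v by (auto simp: pos_def_def)
    ultimately show False by simp
  qed
  from det_non_zero_imp_unit[OF A this, of undefined]
  show ?thesis unfolding Units_def ring_mat_def by auto
qed

lemma left_inverse_eq_right_inverse:
  fixes A B C :: "complex mat"
  assumes A: "A \<in> carrier_mat d d" and B: "B \<in> carrier_mat d d" and C: "C \<in> carrier_mat d d"
    and AB: "A * B = 1\<^sub>m d" and CA: "C * A = 1\<^sub>m d"
  shows "C = B"
proof -
  have "C = C * (A * B)" using C by (simp add: AB)
  also have "\<dots> = (C * A) * B" using assoc_mult_mat[OF C A B] by simp
  also have "\<dots> = B" using B by (simp add: CA)
  finally show ?thesis .
qed

lemma minv_eqI:
  assumes A: "A \<in> carrier_mat d d" and B: "B \<in> carrier_mat d d"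
    and AB: "A * B = 1\<^sub>m d" and BA: "B * A = 1\<^sub>m d"
  shows "minv A = B"
  unfolding minv_def
proof (rule the_equality)
  fix C assume "C \<in> carrier_mat (dim_row A) (dim_row A) \<and> A * C = 1\<^sub>m (dim_row A) \<and> C * A = 1\<^sub>m (dim_row A)"
  with A show "C = B" using left_inverse_eq_right_inverse[OF A B _ AB] by auto
qed (use assms in auto)

lemma faithful_stateD:
  assumes "faithful_state d A"
  shows "A \<in> carrier_mat d d" "mat_adjoint A = A" "mtrace A = 1"
  using assms by (auto simp: faithful_state_def pos_def_def)

lemma faithful_state_dim_pos: "faithful_state d A \<Longrightarrow> d > 0"
  by (cases d) (auto simp: faithful_state_def pos_def_def mtrace_def)

lemma faithful_state_minv:
  assumes "faithful_state d A"
  shows "minv A \<in> carrier_mat d d" "A * minv A = 1\<^sub>m d" "minv A * A = 1\<^sub>m d"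
    "mat_adjoint (minv A) = minv A"
proof -
  note A = faithful_stateD(1)[OF assms] and hA = faithful_stateD(2)[OF assms]
  obtain B where B: "B \<in> carrier_mat d d" and AB: "A * B = 1\<^sub>m d" and BA: "B * A = 1\<^sub>m d"
    using assms pos_def_invertible by (auto simp: faithful_state_def)
  have "mat_adjoint B * A = mat_adjoint (A * B)"
    using hA by (simp add: mat_adjoint_mult[OF A B])
  then have "mat_adjoint B * A = 1\<^sub>m d" by (simp add: AB)
  then have "mat_adjoint B = B"
    by (rule left_inverse_eq_right_inverse[OF A B mat_adjoint_carrier_mat[OF B] AB])
  then show "minv A \<in> carrier_mat d d" "A * minv A = 1\<^sub>m d" "minv A * A = 1\<^sub>m d"
    "mat_adjoint (minv A) = minv A"
    using minv_eqI[OF A B AB BA] B AB BA by auto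
qed

subsection \<open>The closed form of the trace\<close>

lemma mtrace_square_diff_mult_inverse:
  fixes A B Bi :: "complex mat"
  assumes A: "A \<in> carrier_mat m m" and B: "B \<in> carrier_mat m m" and Bi: "Bi \<in> carrier_mat m m"
    and BBi: "B * Bi = 1\<^sub>m m" and BiB: "Bi * B = 1\<^sub>m m"
  shows "mtrace ((A - B) * (A - B) * Bi) = mtrace (A * A * Bi) - 2 * mtrace A + mtrace B"
proof -
  have ABi: "A * Bi \<in> carrier_mat m m" using A Bi by simp
  have "(A - B) * Bi = A * Bi - 1\<^sub>m m"
    using minus_mult_distrib_mat[OF A B Bi] by (simp add: BBi)
  then have "(A - B) * (A - B) * Bi = (A - B) * (A * Bi - 1\<^sub>m m)"
    using assoc_mult_mat[OF minus_carrier_mat[OF B] minus_carrier_mat[OF B] Bi] A by simp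
  also have "\<dots> = A * (A * Bi - 1\<^sub>m m) - B * (A * Bi - 1\<^sub>m m)"
    using ABi by (intro minus_mult_distrib_mat[OF A B]) auto
  also have "\<dots> = (A * (A * Bi) - A) - (B * (A * Bi) - B)"
    using mult_minus_distrib_mat[OF A ABi, of "1\<^sub>m m"] mult_minus_distrib_mat[OF B ABi, of "1\<^sub>m m"] A B
    by simp
  finally have expand: "(A - B) * (A - B) * Bi = (A * A * Bi - A) - (B * (A * Bi) - B)"
    using assoc_mult_mat[OF A A Bi] by simp
  have "mtrace (B * (A * Bi)) = mtrace (A * (Bi * B))"
    using mtrace_mult_comm[OF B ABi] assoc_mult_mat[OF A Bi B] by simp
  then have cyclic: "mtrace (B * (A * Bi)) = mtrace A"
    using A by (simp add: BiB)
  have AABi: "A * A * Bi \<in> carrier_mat m m" and BABi: "B * (A * Bi) \<in> carrier_mat m m"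
    using A B Bi by simp_all
  show ?thesis
    unfolding expand using cyclic
    by (simp add: mtrace_minus[OF minus_carrier_mat[OF A] minus_carrier_mat[OF B]]
        mtrace_minus[OF AABi A] mtrace_minus[OF BABi B])
qed

lemma mtrace_square_mult_inverse_state:
  assumes S: "S \<in> carrier_mat m m" and P: "P \<in> carrier_mat m m" and Q: "Q \<in> carrier_mat m m"
    and PQ: "P * Q = 1\<^sub>m m" and QP: "Q * P = 1\<^sub>m m"
    and hS: "mat_adjoint S = S" and hP: "mat_adjoint P = P"
    and trS: "mtrace S = 1" and trP: "mtrace P = 1"
  shows "mtrace (S * S * Q) = 1 + mtrace ((S - P) * mat_adjoint (S - P) * Q)"
  using mtrace_square_diff_mult_inverse[OF S P Q PQ QP] trS trP
  by (simp add: mat_adjoint_minus[OF S P] hS hP)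

lemma mult_inverse_mult_adjoint:
  fixes P Q D :: "complex mat"
  assumes P: "P \<in> carrier_mat m m" and Q: "Q \<in> carrier_mat m m" and D: "D \<in> carrier_mat m m"
    and PQ: "P * Q = 1\<^sub>m m" and hQ: "mat_adjoint Q = Q"
  shows "P * (Q * D) * mat_adjoint (Q * D) = D * mat_adjoint D * Q"
proof -
  have "P * (Q * D) = D"
    using assoc_mult_mat[OF P Q D] D by (simp add: PQ)
  moreover have "mat_adjoint (Q * D) = mat_adjoint D * Q"
    using mat_adjoint_mult[OF Q D] hQ by simp
  ultimately show ?thesis
    using assoc_mult_mat[OF D mat_adjoint_carrier_mat[OF D] Q] by simp
qed

lemma LRn1_eq:
  assumes "faithful_state d (\<rho> \<theta>)" and s: "\<rho> (\<theta> + \<delta>) \<in> carrier_mat d d"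
  shows "LRn1 \<rho> n \<theta> \<delta> = tpow (minv (\<rho> \<theta>)) n * Delta1 \<rho> n \<theta> \<delta>"
proof -
  note R = faithful_state_minv[OF assms(1)] and d = faithful_state_dim_pos[OF assms(1)]
    and r = faithful_stateD(1)[OF assms(1)]
  let ?P = "tpow (\<rho> \<theta>) n" and ?Q = "tpow (minv (\<rho> \<theta>)) n" and ?D = "Delta1 \<rho> n \<theta> \<delta>"
  have P: "?P \<in> carrier_mat (d^n) (d^n)" and Q: "?Q \<in> carrier_mat (d^n) (d^n)"
    using tpow_carrier_mat r R(1) by blast+
  have D: "?D \<in> carrier_mat (d^n) (d^n)"
    unfolding Delta1_def using tpow_carrier_mat[OF s] P by auto
  have PQ: "?P * ?Q = 1\<^sub>m (d^n)" and QP: "?Q * ?P = 1\<^sub>m (d^n)"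
    using tpow_mult[OF r R(1) d] tpow_mult[OF R(1) r d] R(2,3) by (simp_all add: tpow_one)
  show ?thesis unfolding LRn1_def
  proof (rule the_equality)
    show "?Q * ?D \<in> carrier_mat (dim_row ?P) (dim_row ?P) \<and> ?D = ?P * (?Q * ?D)"
      using P Q D assoc_mult_mat[OF P Q D] by (simp add: PQ)
  next
    fix L assume "L \<in> carrier_mat (dim_row ?P) (dim_row ?P) \<and> ?D = ?P * L"
    then have L: "L \<in> carrier_mat (d^n) (d^n)" and DL: "?D = ?P * L" using P by auto
    have "?Q * ?D = (?Q * ?P) * L" using assoc_mult_mat[OF Q P L] DL by simp
    then show "L = ?Q * ?D" using L by (simp add: QP)
  qed
qed

lemma mtrace_tpow_LRn1:
  assumes \<rho>: "faithful_state d (\<rho> \<theta>)" and \<sigma>: "faithful_state d (\<rho> (\<theta> + \<delta>))"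
  shows "mtrace (tpow (\<rho> \<theta>) n * LRn1 \<rho> n \<theta> \<delta> * mat_adjoint (LRn1 \<rho> n \<theta> \<delta>))
    = of_real (1 / \<delta>\<^sup>2) * (mtrace (\<rho> (\<theta> + \<delta>) * \<rho> (\<theta> + \<delta>) * minv (\<rho> \<theta>)) ^ n - 1)"
proof -
  note R = faithful_state_minv[OF \<rho>] and d = faithful_state_dim_pos[OF \<rho>]
    and r = faithful_stateD[OF \<rho>] and s = faithful_stateD[OF \<sigma>]
  let ?P = "tpow (\<rho> \<theta>) n" and ?S = "tpow (\<rho> (\<theta> + \<delta>)) n" and ?Q = "tpow (minv (\<rho> \<theta>)) n"
  have P: "?P \<in> carrier_mat (d^n) (d^n)" and S: "?S \<in> carrier_mat (d^n) (d^n)"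
    and Q: "?Q \<in> carrier_mat (d^n) (d^n)"
    using tpow_carrier_mat r(1) s(1) R(1) by blast+
  have PQ: "?P * ?Q = 1\<^sub>m (d^n)" and QP: "?Q * ?P = 1\<^sub>m (d^n)"
    using tpow_mult[OF r(1) R(1) d] tpow_mult[OF R(1) r(1) d] R(2,3) by (simp_all add: tpow_one)
  have "?S * ?S * ?Q = tpow (\<rho> (\<theta> + \<delta>) * \<rho> (\<theta> + \<delta>) * minv (\<rho> \<theta>)) n"
    using tpow_mult[OF s(1) s(1) d] tpow_mult[OF mult_carrier_mat[OF s(1) s(1)] R(1) d] by simp
  then have SSQ: "mtrace (?S * ?S * ?Q) = mtrace (\<rho> (\<theta> + \<delta>) * \<rho> (\<theta> + \<delta>) * minv (\<rho> \<theta>)) ^ n"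
    using mtrace_tpow[OF mult_carrier_mat[OF mult_carrier_mat[OF s(1) s(1)] R(1)] d] by simp
  have D: "Delta1 \<rho> n \<theta> \<delta> \<in> carrier_mat (d^n) (d^n)"
    unfolding Delta1_def using P by (intro smult_carrier_mat minus_carrier_mat)
  have "mtrace (?P * LRn1 \<rho> n \<theta> \<delta> * mat_adjoint (LRn1 \<rho> n \<theta> \<delta>))
      = mtrace (Delta1 \<rho> n \<theta> \<delta> * mat_adjoint (Delta1 \<rho> n \<theta> \<delta>) * ?Q)"
    unfolding LRn1_eq[OF \<rho> s(1)]
    using mult_inverse_mult_adjoint[OF P Q D PQ] R(4) by (simp add: mat_adjoint_tpow)
  also have "\<dots> = of_real ((1 / \<delta>)\<^sup>2) * mtrace ((?S - ?P) * mat_adjoint (?S - ?P) * ?Q)"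
    unfolding Delta1_def by (rule mtrace_smult_mult_adjoint[OF minus_carrier_mat[OF P] Q])
  also have "mtrace ((?S - ?P) * mat_adjoint (?S - ?P) * ?Q) = mtrace (?S * ?S * ?Q) - 1"
    using mtrace_square_mult_inverse_state[OF S P Q PQ QP] r s d
    by (simp add: mat_adjoint_tpow mtrace_tpow)
  finally show ?thesis by (simp add: SSQ power_one_over)
qed

definition diff_quot :: "(real \<Rightarrow> complex mat) \<Rightarrow> real \<Rightarrow> real \<Rightarrow> complex mat" where
  "diff_quot \<rho> \<theta> \<delta> = of_real (1 / \<delta>) \<cdot>\<^sub>m (\<rho> (\<theta> + \<delta>) - \<rho> \<theta>)"

lemma Re_mtrace_tpow_LRn1:
  assumes \<rho>: "faithful_state d (\<rho> \<theta>)" and \<sigma>: "faithful_state d (\<rho> (\<theta> + \<delta>))" and "\<delta> \<noteq> 0"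
  defines "g \<equiv> Re (mtrace (diff_quot \<rho> \<theta> \<delta> * mat_adjoint (diff_quot \<rho> \<theta> \<delta>) * minv (\<rho> \<theta>)))"
  shows "Re (mtrace (tpow (\<rho> \<theta>) n * LRn1 \<rho> n \<theta> \<delta> * mat_adjoint (LRn1 \<rho> n \<theta> \<delta>)))
    = ((1 + \<delta>\<^sup>2 * g) ^ n - 1) / \<delta>\<^sup>2"
proof -
  note R = faithful_state_minv[OF \<rho>] and r = faithful_stateD[OF \<rho>] and s = faithful_stateD[OF \<sigma>]
  let ?X = "\<rho> (\<theta> + \<delta>) - \<rho> \<theta>"
  have X: "?X \<in> carrier_mat d d" using r(1) by (rule minus_carrier_mat)
  have XX: "?X * mat_adjoint ?X \<in> carrier_mat d d" "mat_adjoint (?X * mat_adjoint ?X) = ?X * mat_adjoint ?X"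
    using X mult_carrier_mat[OF X mat_adjoint_carrier_mat[OF X]]
      mat_adjoint_mult[OF X mat_adjoint_carrier_mat[OF X]] by auto
  have real: "mtrace (?X * mat_adjoint ?X * minv (\<rho> \<theta>)) = of_real (\<delta>\<^sup>2 * g)"
  proof -
    have "mtrace (?X * mat_adjoint ?X * minv (\<rho> \<theta>)) = of_real (\<delta>\<^sup>2)
        * mtrace (diff_quot \<rho> \<theta> \<delta> * mat_adjoint (diff_quot \<rho> \<theta> \<delta>) * minv (\<rho> \<theta>))"
      using mtrace_smult_mult_adjoint[OF X R(1), of "1 / \<delta>"] \<open>\<delta> \<noteq> 0\<close>
      by (simp add: diff_quot_def power_one_over)
    moreover have "Im (mtrace (?X * mat_adjoint ?X * minv (\<rho> \<theta>))) = 0"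
      using mtrace_hermitian_mult_real[OF XX(1) R(1) XX(2) R(4)] .
    ultimately show ?thesis
      by (simp add: g_def complex_eq_iff)
  qed
  have "mtrace (\<rho> (\<theta> + \<delta>) * \<rho> (\<theta> + \<delta>) * minv (\<rho> \<theta>)) = of_real (1 + \<delta>\<^sup>2 * g)"
    using mtrace_square_mult_inverse_state[OF s(1) r(1) R(1-3) s(2) r(2) s(3) r(3)] real by simp
  then show ?thesis
    unfolding mtrace_tpow_LRn1[OF \<rho> \<sigma>]
    by (simp del: of_real_power add: of_real_power[symmetric] of_real_diff[symmetric])
qed

subsection \<open>Limits\<close>

lemma tendsto_right_diff_quot:
  fixes f :: "real \<Rightarrow> 'a::real_normed_vector"
  assumes "(f has_vector_derivative f') (at x within {x..})"
  shows "((\<lambda>\<delta>. (1 / \<delta>) *\<^sub>R (f (x + \<delta>) - f x)) \<longlongrightarrow> f') (at_right 0)"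
proof -
  have "((\<lambda>y. (1 / norm (y - x)) *\<^sub>R (f y - (f x + (y - x) *\<^sub>R f'))) \<longlongrightarrow> 0) (at_right x)"
    using assms
    unfolding has_vector_derivative_def has_derivative_within at_within_Ici_at_right by simp
  then have "((\<lambda>\<delta>. (1 / norm (\<delta> + x - x)) *\<^sub>R (f (\<delta> + x) - (f x + (\<delta> + x - x) *\<^sub>R f')))
      \<longlongrightarrow> 0) (at_right 0)"
    unfolding filterlim_at_right_to_0[of _ _ x] by simp
  moreover have "\<forall>\<^sub>F \<delta> in at_right 0. (1 / norm (\<delta> + x - x)) *\<^sub>R (f (\<delta> + x) - (f x + (\<delta> + x - x) *\<^sub>R f'))
      = (1 / \<delta>) *\<^sub>R (f (x + \<delta>) - f x) - f'"
    using eventually_at_right_less[of "0::real"]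
  proof eventually_elim
    case (elim \<delta>)
    then have "norm \<delta> = \<delta>" "(1 / \<delta>) *\<^sub>R \<delta> *\<^sub>R f' = f'" by simp_all
    then show ?case by (simp add: scaleR_diff_right scaleR_add_right add.commute[of \<delta> x])
  qed
  ultimately have "((\<lambda>\<delta>. (1 / \<delta>) *\<^sub>R (f (x + \<delta>) - f x) - f') \<longlongrightarrow> 0) (at_right 0)"
    by (rule Lim_transform_eventually)
  then show ?thesis by (rule LIM_zero_cancel)
qed

lemma tendsto_mtrace_mult_adjoint:
  assumes X: "\<forall>\<^sub>F x in F. X x \<in> carrier_mat d d" and L: "L \<in> carrier_mat d d"
    and R: "R \<in> carrier_mat d d"
    and lim: "\<And>i j. i < d \<Longrightarrow> j < d \<Longrightarrow> ((\<lambda>x. X x $$ (i, j)) \<longlongrightarrow> L $$ (i, j)) F"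
  shows "((\<lambda>x. mtrace (X x * mat_adjoint (X x) * R)) \<longlongrightarrow> mtrace (L * mat_adjoint L * R)) F"
proof -
  have "((\<lambda>x. \<Sum>i<d. \<Sum>l<d. (\<Sum>k<d. X x $$ (i, k) * cnj (X x $$ (l, k))) * R $$ (l, i))
      \<longlongrightarrow> mtrace (L * mat_adjoint L * R)) F"
    unfolding mtrace_mult_adjoint_mult_eq_sum[OF L R]
    by (intro tendsto_sum tendsto_mult tendsto_cnj tendsto_const lim) auto
  moreover have "\<forall>\<^sub>F x in F. (\<Sum>i<d. \<Sum>l<d. (\<Sum>k<d. X x $$ (i, k) * cnj (X x $$ (l, k))) * R $$ (l, i))
      = mtrace (X x * mat_adjoint (X x) * R)"
    using X by eventually_elim (simp add: mtrace_mult_adjoint_mult_eq_sum[OF _ R])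
  ultimately show ?thesis by (rule Lim_transform_eventually)
qed

lemma tendsto_mtrace_diff_quot:
  assumes deriv: "has_right_deriv_mat d \<rho> \<rho>' \<theta>" and r: "\<rho> \<theta> \<in> carrier_mat d d"
    and s: "\<forall>\<^sub>F \<delta> in at_right 0. \<rho> (\<theta> + \<delta>) \<in> carrier_mat d d" and R: "R \<in> carrier_mat d d"
  shows "((\<lambda>\<delta>. mtrace (diff_quot \<rho> \<theta> \<delta> * mat_adjoint (diff_quot \<rho> \<theta> \<delta>) * R))
    \<longlongrightarrow> mtrace (\<rho>' * mat_adjoint \<rho>' * R)) (at_right 0)"
proof (rule tendsto_mtrace_mult_adjoint)
  show "\<rho>' \<in> carrier_mat d d" using deriv unfolding has_right_deriv_mat_def by blast
  show "\<forall>\<^sub>F \<delta> in at_right 0. diff_quot \<rho> \<theta> \<delta> \<in> carrier_mat d d"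
    using s by eventually_elim (use r in \<open>auto simp: diff_quot_def\<close>)
  fix i j assume ij: "i < d" "j < d"
  then have "((\<lambda>t. \<rho> t $$ (i, j)) has_vector_derivative \<rho>' $$ (i, j)) (at \<theta> within {\<theta>..})"
    using deriv unfolding has_right_deriv_mat_def by blast
  then have "((\<lambda>\<delta>. (1 / \<delta>) *\<^sub>R (\<rho> (\<theta> + \<delta>) $$ (i, j) - \<rho> \<theta> $$ (i, j))) \<longlongrightarrow> \<rho>' $$ (i, j)) (at_right 0)"
    by (rule tendsto_right_diff_quot)
  moreover have "\<forall>\<^sub>F \<delta> in at_right 0.
      (1 / \<delta>) *\<^sub>R (\<rho> (\<theta> + \<delta>) $$ (i, j) - \<rho> \<theta> $$ (i, j)) = diff_quot \<rho> \<theta> \<delta> $$ (i, j)"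
    using s by eventually_elim (use r ij in \<open>simp add: diff_quot_def scaleR_conv_of_real\<close>)
  ultimately show "((\<lambda>\<delta>. diff_quot \<rho> \<theta> \<delta> $$ (i, j)) \<longlongrightarrow> \<rho>' $$ (i, j)) (at_right 0)"
    by (rule Lim_transform_eventually)
qed (rule R)

(* The error |n ln (1 + x/n) - x| is at most 2 x\<^sup>2 / n once |x/n| \<le> 1/2. *)
lemma tendsto_power_one_plus_div:
  fixes x :: "nat \<Rightarrow> real"
  assumes x: "x \<longlonglongrightarrow> a"
  shows "(\<lambda>n. (1 + x n / real n) ^ n) \<longlonglongrightarrow> exp a"
proof -
  have y: "(\<lambda>n. x n / real n) \<longlonglongrightarrow> 0"
    using tendsto_mult[OF x lim_inverse_n'] by (simp add: divide_inverse)
  have "\<forall>\<^sub>F n in sequentially. \<bar>x n / real n\<bar> < 1/2"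
    by (rule order_tendstoD(2)[OF tendsto_rabs_zero[OF y]]) simp
  then have small: "\<forall>\<^sub>F n in sequentially. n > 0 \<and> \<bar>x n / real n\<bar> \<le> 1/2"
    using eventually_gt_at_top[of 0] by eventually_elim auto
  have err: "(\<lambda>n. 2 * (x n)\<^sup>2 / real n) \<longlonglongrightarrow> 0"
    using tendsto_mult[OF tendsto_mult[OF tendsto_const[of 2] tendsto_power[OF x, of 2]] lim_inverse_n']
    by (simp add: divide_inverse)
  have "(\<lambda>n. real n * ln (1 + x n / real n) - x n) \<longlonglongrightarrow> 0"
  proof (rule Lim_null_comparison[OF _ err])
    show "\<forall>\<^sub>F n in sequentially. norm (real n * ln (1 + x n / real n) - x n) \<le> 2 * (x n)\<^sup>2 / real n"
      using small
    proof eventually_elim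
      case (elim n)
      have "real n * ln (1 + x n / real n) - x n = real n * (ln (1 + x n / real n) - x n / real n)"
        using elim by (simp add: right_diff_distrib)
      then have "norm (real n * ln (1 + x n / real n) - x n) = real n * \<bar>ln (1 + x n / real n) - x n / real n\<bar>"
        by (simp add: abs_mult)
      also have "\<dots> \<le> real n * (2 * (x n / real n)\<^sup>2)"
        using abs_ln_one_plus_x_minus_x_bound[of "x n / real n"] elim by (intro mult_left_mono) auto
      also have "\<dots> = 2 * (x n)\<^sup>2 / real n"
        using elim by (simp add: power2_eq_square)
      finally show ?case .
    qed
  qed
  then have "(\<lambda>n. real n * ln (1 + x n / real n)) \<longlonglongrightarrow> a"
    using tendsto_add[OF _ x] by fastforce
  then have "(\<lambda>n. exp (real n * ln (1 + x n / real n))) \<longlonglongrightarrow> exp a"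
    by (rule tendsto_exp)
  moreover have "\<forall>\<^sub>F n in sequentially. exp (real n * ln (1 + x n / real n)) = (1 + x n / real n) ^ n"
    using small
  proof eventually_elim
    case (elim n)
    then have "1 + x n / real n > 0" using abs_le_iff[of "x n / real n" "1/2"] by linarith
    then show ?case by (simp add: exp_of_nat_mult)
  qed
  ultimately show ?thesis by (rule Lim_transform_eventually)
qed

lemma tendsto_exp_square_quotient:
  "((\<lambda>h. (exp (h\<^sup>2 * J) - 1) / h\<^sup>2) \<longlongrightarrow> (J::real)) (at_right 0)"
proof -
  have "((\<lambda>y. exp (y * J)) has_field_derivative exp (0 * J) * J) (at 0)"
    by (auto intro!: derivative_eq_intros)
  then have "((\<lambda>y. (exp (y * J) - 1) / y) \<longlongrightarrow> J) (at 0)"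
    unfolding has_field_derivative_iff by simp
  moreover have "filterlim (\<lambda>h::real. h\<^sup>2) (at 0) (at_right 0)"
  proof (rule filterlim_atI)
    show "((\<lambda>h::real. h\<^sup>2) \<longlongrightarrow> 0) (at_right 0)"
      by (auto intro!: tendsto_eq_intros)
    show "\<forall>\<^sub>F h in at_right 0. (h::real)\<^sup>2 \<noteq> 0"
      using eventually_at_right_less[of 0] by eventually_elim simp
  qed
  ultimately show ?thesis using filterlim_compose by fastforce
qed

lemma Limsup_Limsup_power_sqrt:
  fixes q :: "nat \<Rightarrow> real \<Rightarrow> real" and g :: "real \<Rightarrow> real"
  assumes g: "(g \<longlongrightarrow> J) (at_right 0)"
    and q: "\<forall>\<^sub>F \<delta> in at_right 0. \<forall>n. q n \<delta> = ((1 + \<delta>\<^sup>2 * g \<delta>) ^ n - 1) / \<delta>\<^sup>2"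
  shows "Limsup (at_right 0) (\<lambda>h. Limsup sequentially
    (\<lambda>n. ereal (q n (h / sqrt (real n)) / (sqrt (real n))\<^sup>2))) = ereal J"
proof -
  have inner: "Limsup sequentially (\<lambda>n. ereal (q n (h / sqrt (real n)) / (sqrt (real n))\<^sup>2))
      = ereal ((exp (h\<^sup>2 * J) - 1) / h\<^sup>2)" if h: "h > 0" for h
  proof -
    have "(\<lambda>n. h / sqrt (real n)) \<longlonglongrightarrow> 0"
      by (intro tendsto_divide_0[OF tendsto_const] filterlim_at_top_imp_at_infinity
          filterlim_compose[OF sqrt_at_top filterlim_real_sequentially])
    moreover have "\<forall>\<^sub>F n in sequentially. h / sqrt (real n) > 0"
      using eventually_gt_at_top[of 0] by eventually_elim (use h in simp)
    ultimately have \<delta>: "filterlim (\<lambda>n. h / sqrt (real n)) (at_right 0) sequentially"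
      by (rule tendsto_imp_filterlim_at_right)
    have "(\<lambda>n. (1 + h\<^sup>2 * g (h / sqrt (real n)) / real n) ^ n) \<longlonglongrightarrow> exp (h\<^sup>2 * J)"
      by (intro tendsto_power_one_plus_div tendsto_mult tendsto_const filterlim_compose[OF g \<delta>])
    with h have "(\<lambda>n. ((1 + h\<^sup>2 * g (h / sqrt (real n)) / real n) ^ n - 1) / h\<^sup>2)
        \<longlonglongrightarrow> (exp (h\<^sup>2 * J) - 1) / h\<^sup>2"
      by (intro tendsto_divide tendsto_diff tendsto_const) simp_all
    moreover have "\<forall>\<^sub>F n in sequentially.
        ((1 + h\<^sup>2 * g (h / sqrt (real n)) / real n) ^ n - 1) / h\<^sup>2
        = q n (h / sqrt (real n)) / (sqrt (real n))\<^sup>2"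
      using eventually_compose_filterlim[OF q \<delta>] eventually_gt_at_top[of 0]
      by eventually_elim (use h in \<open>simp add: power_divide\<close>)
    ultimately have "(\<lambda>n. q n (h / sqrt (real n)) / (sqrt (real n))\<^sup>2) \<longlonglongrightarrow> (exp (h\<^sup>2 * J) - 1) / h\<^sup>2"
      by (rule Lim_transform_eventually)
    then show ?thesis
      by (intro lim_imp_Limsup tendsto_ereal) simp_all
  qed
  have "((\<lambda>h. Limsup sequentially (\<lambda>n. ereal (q n (h / sqrt (real n)) / (sqrt (real n))\<^sup>2)))
      \<longlongrightarrow> ereal J) (at_right 0)"
    using tendsto_ereal[OF tendsto_exp_square_quotient[of J]]
  proof (rule Lim_transform_eventually)
    show "\<forall>\<^sub>F h in at_right 0. ereal ((exp (h\<^sup>2 * J) - 1) / h\<^sup>2)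
        = Limsup sequentially (\<lambda>n. ereal (q n (h / sqrt (real n)) / (sqrt (real n))\<^sup>2))"
      using eventually_at_right_less[of "0::real"] by eventually_elim (rule inner[symmetric])
  qed
  then show ?thesis by (intro lim_imp_Limsup) simp_all
qed

theorem mainTheorem6:
  fixes d :: nat and \<rho> :: "real \<Rightarrow> complex mat" and \<rho>' :: "complex mat"
    and \<Theta> :: "real set" and \<theta> :: real
  assumes model: "\<And>t. t \<in> \<Theta> \<Longrightarrow> faithful_state d (\<rho> t)"
    and theta_in: "\<theta> \<in> \<Theta>"
    and right_nbhd: "\<exists>\<epsilon>>0. {\<theta>..<\<theta> + \<epsilon>} \<subseteq> \<Theta>"
    and deriv: "has_right_deriv_mat d \<rho> \<rho>' \<theta>"
  shows "JR1 \<rho> \<theta> (\<lambda>n. sqrt (real n)) =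
    ereal (Re (mtrace (\<rho> \<theta> * (minv (\<rho> \<theta>) * \<rho>') * mat_adjoint (minv (\<rho> \<theta>) * \<rho>'))))"
proof -
  have \<rho>: "faithful_state d (\<rho> \<theta>)" using model theta_in .
  note R = faithful_state_minv[OF \<rho>]
  obtain \<epsilon> where \<epsilon>: "\<epsilon> > 0" "{\<theta>..<\<theta> + \<epsilon>} \<subseteq> \<Theta>" using right_nbhd by blast
  have \<sigma>: "\<forall>\<^sub>F \<delta> in at_right 0. faithful_state d (\<rho> (\<theta> + \<delta>)) \<and> \<delta> \<noteq> 0"
    using eventually_at_right_real[OF \<epsilon>(1)]
    by eventually_elim (use \<epsilon>(2) in \<open>auto intro!: model simp: subset_eq\<close>)
  define g where
    "g \<delta> = Re (mtrace (diff_quot \<rho> \<theta> \<delta> * mat_adjoint (diff_quot \<rho> \<theta> \<delta>) * minv (\<rho> \<theta>)))" for \<delta>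
  have "\<forall>\<^sub>F \<delta> in at_right 0. \<rho> (\<theta> + \<delta>) \<in> carrier_mat d d"
    using \<sigma> by eventually_elim (simp add: faithful_stateD)
  then have "(g \<longlongrightarrow> Re (mtrace (\<rho>' * mat_adjoint \<rho>' * minv (\<rho> \<theta>)))) (at_right 0)"
    unfolding g_def by (intro tendsto_Re tendsto_mtrace_diff_quot[OF deriv faithful_stateD(1)[OF \<rho>]] R(1))
  moreover have "\<forall>\<^sub>F \<delta> in at_right 0. \<forall>n.
      Re (mtrace (tpow (\<rho> \<theta>) n * LRn1 \<rho> n \<theta> \<delta> * mat_adjoint (LRn1 \<rho> n \<theta> \<delta>)))
      = ((1 + \<delta>\<^sup>2 * g \<delta>) ^ n - 1) / \<delta>\<^sup>2"
    using \<sigma> by eventually_elim (simp add: g_def Re_mtrace_tpow_LRn1[of d \<rho> \<theta>, OF \<rho>])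
  ultimately have "JR1 \<rho> \<theta> (\<lambda>n. sqrt (real n))
      = ereal (Re (mtrace (\<rho>' * mat_adjoint \<rho>' * minv (\<rho> \<theta>))))"
    unfolding JR1_def by (rule Limsup_Limsup_power_sqrt)
  also have "\<rho>' * mat_adjoint \<rho>' * minv (\<rho> \<theta>)
      = \<rho> \<theta> * (minv (\<rho> \<theta>) * \<rho>') * mat_adjoint (minv (\<rho> \<theta>) * \<rho>')"
    using deriv unfolding has_right_deriv_mat_def
    by (intro mult_inverse_mult_adjoint[symmetric, OF faithful_stateD(1)[OF \<rho>] R(1) _ R(2) R(4)]) blast
  finally show ?thesis .
qed

end
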